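(* A relation $R\subseteq\{0,1\}^V$ is a delta matroid if and only if its indicator signature is terraced.
   Context: $R$ is a delta matroid if for all $x,y\in R$ and all $i$ with $x_i\ne y_i$ there exists $j$ with $x_j\ne y_j$ (possibly $j=i$) such that $x^{\{i,j\}}\in R$, where $x^U$ denotes $x$ with the coordinates in $U$ flipped. A partial configuration $p$ of $V$ is an element of $\{0,1\}^{\mathrm{dom}(p)}$ with $\mathrm{dom}(p)\subseteq V$, and the pinning of a signature $F$ on $V$ is $F_p(x)=F(x,p)$ on $V\setminus\mathrm{dom}(p)$; $p^{\{i\}}$ is $p$ with coordinate $i$ flipped. A signature $F:\{0,1\}^V\to\mathbb R_{\ge0}$ is terraced if for every partial configuration $p$ of $V$ and all $i,j\in\mathrm{dom}(p)$: if $F_p$ is identically zero then $F_{p^{\{i\}}}$ and $F_{p^{\{j\}}}$ are linearly dependent (one is a scalar multiple of the other). *)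

theory Defs
  imports Complex_Main
begin

text \<open>Configurations in {0,1}^V are represented as subsets x of V
  (x = set of coordinates equal to 1). Flipping the coordinates in U is
  symmetric difference.\<close>

definition flip :: "'a set \<Rightarrow> 'a set \<Rightarrow> 'a set" where
  "flip x U = (x - U) \<union> (U - x)"

definition delta_matroid :: "'a set set \<Rightarrow> bool" where
  "delta_matroid R \<longleftrightarrow>
     (\<forall>x\<in>R. \<forall>y\<in>R. \<forall>i. (i \<in> x) \<noteq> (i \<in> y) \<longrightarrow>
        (\<exists>j. (j \<in> x) \<noteq> (j \<in> y) \<and> flip x {i, j} \<in> R))"

text \<open>A partial configuration p is a pair (D, P) with D = dom p \<subseteq> V and
  P \<subseteq> D the coordinates of D set to 1. The pinning F_p is the function
  y \<mapsto> F (y \<union> P) on configurations y \<subseteq> V - D.\<close>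

definition pinning :: "('a set \<Rightarrow> real) \<Rightarrow> 'a set \<Rightarrow> 'a set \<Rightarrow> real" where
  "pinning F P = (\<lambda>y. F (y \<union> P))"

definition lin_dep_on :: "'a set set \<Rightarrow> ('a set \<Rightarrow> real) \<Rightarrow> ('a set \<Rightarrow> real) \<Rightarrow> bool" where
  "lin_dep_on S G H \<longleftrightarrow>
     (\<exists>c::real. (\<forall>y\<in>S. G y = c * H y) \<or> (\<forall>y\<in>S. H y = c * G y))"

definition terraced :: "'a set \<Rightarrow> ('a set \<Rightarrow> real) \<Rightarrow> bool" where
  "terraced V F \<longleftrightarrow>
     (\<forall>D P. D \<subseteq> V \<longrightarrow> P \<subseteq> D \<longrightarrow>
       (\<forall>i\<in>D. \<forall>j\<in>D.
          (\<forall>y\<in>Pow (V - D). pinning F P y = 0) \<longrightarrow>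
          lin_dep_on (Pow (V - D)) (pinning F (flip P {i})) (pinning F (flip P {j}))))"

definition indicator_sig :: "'a set set \<Rightarrow> 'a set \<Rightarrow> real" where
  "indicator_sig R x = (if x \<in> R then 1 else 0)"

end

theory Submission
  imports Defs
begin

(* The indicator signature of R is 0/1-valued, and two 0/1-valued
   functions are linearly dependent exactly when one of them vanishes or they
   coincide.  Hence terracedness of the indicator signature is a purely
   combinatorial property of R (terraced_rel below, lemma terraced_indicator_iff):
   whenever the pinning of R at P is empty, of the two pinnings at P flipped
   in i resp. j one is empty or both are equal.
   Delta matroid => terraced_rel: a point a of the i-pinning and a point b of the
   j-pinning differ in i; the exchange step for i must flip a second coordinate
   k, and emptiness of the P-pinning forces k = j, placing a in the j-pinning.
   terraced_rel => delta matroid: by induction on the distance |x \<triangle> y|.  Pin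
   the coordinates outside x \<triangle> y together with i and some other j of
   x \<triangle> y to their values in x flipped at i.  If this pinning is nonempty it
   contains a point strictly closer to x than y, and induction applies;
   otherwise terracedness transports x from the i-pinning to the j-pinning,
   which yields flip x {i, j} \<in> R. *)

lemma flip_mem [simp]: "k \<in> flip x U \<longleftrightarrow> (k \<in> x) \<noteq> (k \<in> U)"
  unfolding flip_def by blast

lemma lin_dep_on_01:
  assumes G01: "\<And>y. y \<in> S \<Longrightarrow> G y = 0 \<or> G y = 1"
    and H01: "\<And>y. y \<in> S \<Longrightarrow> H y = 0 \<or> H y = 1"
  shows "lin_dep_on S G H \<longleftrightarrow>
           (\<forall>y\<in>S. G y = 0) \<or> (\<forall>y\<in>S. H y = 0) \<or> (\<forall>y\<in>S. G y = H y)"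
proof
  have equal_if_multiple: "\<forall>y\<in>S. F y = 0 \<or> (\<forall>y\<in>S. F y = K y)"
    if FK: "\<forall>y\<in>S. F y = c * K y"
      and F01: "\<And>y. y \<in> S \<Longrightarrow> F y = 0 \<or> F y = 1"
      and K01: "\<And>y. y \<in> S \<Longrightarrow> K y = 0 \<or> K y = 1"
    for F K :: "_ \<Rightarrow> real" and c
  proof (cases "\<forall>y\<in>S. F y = 0")
    case False
    then obtain y0 where "y0 \<in> S" "F y0 = 1" using F01 by blast
    then have "c = 1" using FK K01[of y0] by force
    then show ?thesis using FK by simp
  qed simp
  assume "lin_dep_on S G H"
  then obtain c where "(\<forall>y\<in>S. G y = c * H y) \<or> (\<forall>y\<in>S. H y = c * G y)"
    unfolding lin_dep_on_def by blast
  then show "(\<forall>y\<in>S. G y = 0) \<or> (\<forall>y\<in>S. H y = 0) \<or> (\<forall>y\<in>S. G y = H y)"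
  proof
    assume "\<forall>y\<in>S. G y = c * H y"
    from equal_if_multiple[OF this G01 H01] show ?thesis by blast
  next
    assume "\<forall>y\<in>S. H y = c * G y"
    from equal_if_multiple[OF this H01 G01] show ?thesis by auto
  qed
next
  assume "(\<forall>y\<in>S. G y = 0) \<or> (\<forall>y\<in>S. H y = 0) \<or> (\<forall>y\<in>S. G y = H y)"
  then show "lin_dep_on S G H"
  proof (elim disjE)
    assume "\<forall>y\<in>S. G y = H y"
    then show ?thesis unfolding lin_dep_on_def by (intro exI[of _ 1]) simp
  qed (unfold lin_dep_on_def, intro exI[of _ 0]; simp)+
qed

definition terraced_rel :: "'a set \<Rightarrow> 'a set set \<Rightarrow> bool" where
  "terraced_rel V R \<longleftrightarrow>
     (\<forall>D P. D \<subseteq> V \<longrightarrow> P \<subseteq> D \<longrightarrow>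
       (\<forall>i\<in>D. \<forall>j\<in>D. (\<forall>y\<in>Pow (V - D). y \<union> P \<notin> R) \<longrightarrow>
          (\<forall>y\<in>Pow (V - D). y \<union> flip P {i} \<notin> R) \<or>
          (\<forall>y\<in>Pow (V - D). y \<union> flip P {j} \<notin> R) \<or>
          (\<forall>y\<in>Pow (V - D). y \<union> flip P {i} \<in> R \<longleftrightarrow> y \<union> flip P {j} \<in> R)))"

lemma terraced_indicator_iff: "terraced V (indicator_sig R) \<longleftrightarrow> terraced_rel V R"
proof -
  have pin: "pinning (indicator_sig R) Q y = (if y \<union> Q \<in> R then 1 else 0)" for Q y
    by (simp add: pinning_def indicator_sig_def)
  have lin_dep: "lin_dep_on S (pinning (indicator_sig R) Q1) (pinning (indicator_sig R) Q2)
      \<longleftrightarrow> (\<forall>y\<in>S. y \<union> Q1 \<notin> R) \<or> (\<forall>y\<in>S. y \<union> Q2 \<notin> R)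
          \<or> (\<forall>y\<in>S. y \<union> Q1 \<in> R \<longleftrightarrow> y \<union> Q2 \<in> R)" for S Q1 Q2
    by (subst lin_dep_on_01) (auto simp: pin)
  show ?thesis
    unfolding terraced_def terraced_rel_def lin_dep by (simp add: pin)
qed

lemma delta_matroidD:
  assumes "delta_matroid R" "x \<in> R" "y \<in> R" "(i \<in> x) \<noteq> (i \<in> y)"
  obtains j where "(j \<in> x) \<noteq> (j \<in> y)" "flip x {i, j} \<in> R"
  using assms unfolding delta_matroid_def by blast

lemma delta_matroid_pinning_exchange:
  assumes dm: "delta_matroid R" and RV: "R \<subseteq> Pow V"
    and D: "P \<subseteq> D" "i \<in> D" "j \<in> D" "i \<noteq> j"
    and empty: "\<forall>y\<in>Pow (V - D). y \<union> P \<notin> R"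
    and a: "a \<subseteq> V - D" "a \<union> flip P {i} \<in> R"
    and b: "b \<subseteq> V - D" "b \<union> flip P {j} \<in> R"
  shows "a \<union> flip P {j} \<in> R"
proof -
  define x where "x = a \<union> flip P {i}"
  define y where "y = b \<union> flip P {j}"
  have outside: "i \<notin> a" "i \<notin> b" "j \<notin> a" "j \<notin> b" using a b D by auto
  have "(i \<in> x) \<noteq> (i \<in> y)" using D outside unfolding x_def y_def by simp
  then obtain k where k: "(k \<in> x) \<noteq> (k \<in> y)" "flip x {i, k} \<in> R"
    using delta_matroidD[OF dm] a(2) b(2) unfolding x_def[symmetric] y_def[symmetric] by blast
  consider "k = i" | "k \<notin> D" | "k \<in> D" "k \<noteq> i" by blast
  then show ?thesis
  proof cases
    case 1
    then have "flip x {i, k} = a \<union> P" using a D(2) unfolding x_def set_eq_iff by auto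
    then show ?thesis using empty a k(2) by auto
  next
    case 2
    have "k \<in> V" using k RV a(2) b(2) unfolding x_def y_def by blast
    then have "flip a {k} \<in> Pow (V - D)" using 2 a(1) by (auto simp: flip_def)
    moreover have "flip x {i, k} = flip a {k} \<union> P"
      using 2 a(1) D(1,2) unfolding x_def set_eq_iff by auto
    ultimately show ?thesis using empty k(2) by auto
  next
    case 3
    have "k \<notin> a" "k \<notin> b" using 3 a(1) b(1) by auto
    then have "k = j" using 3 k(1) unfolding x_def y_def by auto
    moreover have "flip x {i, j} = a \<union> flip P {j}"
      using a(1) D unfolding x_def set_eq_iff by auto
    ultimately show ?thesis using k(2) by simp
  qed
qed

lemma delta_matroid_terraced_rel:
  assumes "delta_matroid R" and "R \<subseteq> Pow V"
  shows "terraced_rel V R"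
  unfolding terraced_rel_def
proof (intro allI impI ballI)
  fix D P i j
  assume D: "D \<subseteq> V" "P \<subseteq> D" "i \<in> D" "j \<in> D"
    and empty: "\<forall>y\<in>Pow (V - D). y \<union> P \<notin> R"
  show "(\<forall>y\<in>Pow (V - D). y \<union> flip P {i} \<notin> R) \<or>
        (\<forall>y\<in>Pow (V - D). y \<union> flip P {j} \<notin> R) \<or>
        (\<forall>y\<in>Pow (V - D). y \<union> flip P {i} \<in> R \<longleftrightarrow> y \<union> flip P {j} \<in> R)"
  proof (cases "i = j")
    case False
    have "y \<union> flip P {i} \<in> R \<longleftrightarrow> y \<union> flip P {j} \<in> R"
      if y: "y \<in> Pow (V - D)"
        and a: "a \<in> Pow (V - D)" "a \<union> flip P {i} \<in> R"
        and b: "b \<in> Pow (V - D)" "b \<union> flip P {j} \<in> R" for y a b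
      using delta_matroid_pinning_exchange[OF assms D(2,3,4) False empty, of y b]
        delta_matroid_pinning_exchange[OF assms D(2,4,3) _ empty, of y a] False a b y by auto
    then show ?thesis by blast
  qed simp
qed

text \<open>Terracedness implies the exchange axiom, by induction on |x \<triangle> y|: either
  the auxiliary pinning yields a point of R strictly between x and y, or it is
  empty and terracedness moves x to flip x {i, j}.\<close>

lemma terraced_rel_delta_matroid:
  assumes T: "terraced_rel V R" and RV: "R \<subseteq> Pow V" and fin: "finite V"
    and "x \<in> R" "y \<in> R" "(i \<in> x) \<noteq> (i \<in> y)"
  shows "\<exists>j. (j \<in> x) \<noteq> (j \<in> y) \<and> flip x {i, j} \<in> R"
  using assms(5,6)
proof (induction "card (flip x y)" arbitrary: y rule: less_induct)
  case less
  define \<Delta> where "\<Delta> = flip x y"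
  have xV: "x \<subseteq> V" "y \<subseteq> V" using \<open>x \<in> R\<close> less.prems RV by auto
  have \<Delta>V: "\<Delta> \<subseteq> V" using xV unfolding \<Delta>_def by auto
  have i\<Delta>: "i \<in> \<Delta>" using less.prems unfolding \<Delta>_def by simp
  show ?case
  proof (cases "\<Delta> = {i}")
    case True
    then have "flip x {i, i} = y" unfolding \<Delta>_def set_eq_iff by auto
    then show ?thesis using less.prems by auto
  next
    case False
    then obtain j where j: "j \<in> \<Delta>" "j \<noteq> i" using i\<Delta> by blast
    then have jxy: "(j \<in> x) \<noteq> (j \<in> y)" unfolding \<Delta>_def by simp
    define D where "D = (V - \<Delta>) \<union> {i, j}"
    define P where "P = flip x {i} \<inter> D"
    have DV: "D \<subseteq> V" "i \<in> D" "j \<in> D" using \<Delta>V i\<Delta> j unfolding D_def by auto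
    show ?thesis
    proof (cases "\<forall>z\<in>Pow (V - D). z \<union> P \<notin> R")
      case False
      then obtain z where z: "z \<subseteq> V - D" "z \<union> P \<in> R" by auto
      txt \<open>A point of the pinning agrees with x off \<Delta> and at j, so it is closer to x.\<close>
      have closer: "flip x (z \<union> P) \<subseteq> \<Delta> - {j}"
      proof
        fix k assume "k \<in> flip x (z \<union> P)"
        moreover have "k \<in> z \<Longrightarrow> k \<in> V \<and> k \<notin> D" "k \<in> x \<Longrightarrow> k \<in> V" using z xV by auto
        ultimately show "k \<in> \<Delta> - {j}" using j i\<Delta> unfolding P_def D_def \<Delta>_def by auto
      qed
      have "flip x (z \<union> P) \<subset> flip x y" using closer j unfolding \<Delta>_def by blast
      moreover have "finite (flip x y)" using \<Delta>V fin finite_subset unfolding \<Delta>_def by blast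
      ultimately have "card (flip x (z \<union> P)) < card (flip x y)" by (rule psubset_card_mono[rotated])
      moreover have "(i \<in> x) \<noteq> (i \<in> z \<union> P)" using z DV unfolding P_def by auto
      ultimately obtain k where k: "(k \<in> x) \<noteq> (k \<in> z \<union> P)" "flip x {i, k} \<in> R"
        using less.hyps z by blast
      have "(k \<in> x) \<noteq> (k \<in> y)" using k(1) closer unfolding \<Delta>_def by auto
      then show ?thesis using k by blast
    next
      case True
      txt \<open>x lies in the i-pinning and y in the j-pinning of R at P.\<close>
      have x_split: "x = (x - D) \<union> flip P {i}" using DV unfolding P_def by auto
      have y_split: "y = (y - D) \<union> flip P {j}"
        using DV j i\<Delta> less.prems(2) jxy unfolding P_def D_def \<Delta>_def by auto
      have "P \<subseteq> D" unfolding P_def by blast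
      moreover have "x - D \<in> Pow (V - D)" "y - D \<in> Pow (V - D)" using xV by auto
      moreover have "(x - D) \<union> flip P {i} \<in> R" "(y - D) \<union> flip P {j} \<in> R"
        using x_split y_split \<open>x \<in> R\<close> less.prems(1) by simp_all
      ultimately have "(x - D) \<union> flip P {j} \<in> R"
        using T DV True unfolding terraced_rel_def by blast
      moreover have "(x - D) \<union> flip P {j} = flip x {i, j}" using DV j(2) unfolding P_def by auto
      ultimately show ?thesis using jxy by auto
    qed
  qed
qed

theorem mainTheorem11:
  fixes V :: "'a set" and R :: "'a set set"
  assumes "finite V" and "R \<subseteq> Pow V"
  shows "delta_matroid R \<longleftrightarrow> terraced V (indicator_sig R)"
  unfolding terraced_indicator_iff
proof
  assume "delta_matroid R"
  then show "terraced_rel V R" using delta_matroid_terraced_rel assms(2) by blast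
next
  assume "terraced_rel V R"
  then show "delta_matroid R"
    unfolding delta_matroid_def using terraced_rel_delta_matroid[OF _ assms(2,1)] by blast
qed

end
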